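(* Let $1\le\alpha_1\le\dots\le\alpha_r\le n$ and $p:=\gamma^{\alpha_1}\cdots\gamma^{\alpha_r}\in V$. Then for every $m\ge1$ and $i_1,\dots,i_m\in\{1,\dots,n\}$, $$\widehat{x^{i_1}}\cdots\widehat{x^{i_m}}\cdot p=\big(\widehat{x^{i_1}}\cdots\widehat{x^{i_m}}\cdot1\big)\,p .$$
   Context: Fix $n\ge1$ and an invertible complex matrix $\eta=(\eta^{ij})$ with $\eta^{ij}=\eta^{ji}$ and inverse $(\eta_{ij})$. $\mathcal{A}=W(2n|n)$ is the associative superalgebra generated by even $x^1,\dots,x^n,\partial_1,\dots,\partial_n$ and odd $\gamma^1,\dots,\gamma^n$ with relations $x^ix^j=x^jx^i$, $\partial_i\partial_j=\partial_j\partial_i$, $\partial_ix^j-x^j\partial_i=\delta_i^j$, $\gamma^i$ commuting with $x^j,\partial_j$, $\gamma^i\gamma^j+\gamma^j\gamma^i=2\eta^{ij}$. Repeated indices are summed; $x_i=\eta_{ij}x^j$, $\partial^i=\eta^{ij}\partial_j$. $\mathcal{A}$ acts on $V=\mathrm{Cl}(\eta)\otimes\mathbb{C}[x^1,\dots,x^n]$ ($x^i,\gamma^i$ by left multiplication, $\partial_i$ by $\partial/\partial x^i$). $X=\frac{\sqrt{-1}}{\sqrt2}\gamma^i\partial_i$, $H=-\frac12(\partial_ix^i+x^i\partial_i)$, $E=-\frac12\partial^i\partial_i$, $V^+=\{v\in V:Xv=0\}$. $I=\mathcal{A}X+\mathcal{A}E$, $Z_n=N_{\mathcal{A}}(I)/I$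 acting on $V^+$; $\widehat{x^i}\in Z_n$ is the class of $(H+1)x^i+\frac12\gamma^jx_j\gamma^i+\frac12x^jx_j\partial^i$. The product $(\cdot)\,p$ is right multiplication in $V$ by $p\in\mathrm{Cl}(\eta)$. *)

theory Defs
  imports Complex_Main "HOL-Library.Poly_Mapping"
begin

text \<open>
  Concrete model of V = Cl(eta) (x) C[x^1,...,x^n].
  Clifford basis: strictly increasing lists S = [s1 < ... < sk] of indices in {1..n},
  standing for gamma^{s1} ... gamma^{sk}.  Polynomial basis: monomials x^a with
  exponent vector a :: nat =>0 nat.  An element of V is a finitely supported
  complex-valued function on pairs (S, a).
\<close>

type_synonym cl = "nat list \<Rightarrow>\<^sub>0 complex"
type_synonym vel = "(nat list \<times> (nat \<Rightarrow>\<^sub>0 nat)) \<Rightarrow>\<^sub>0 complex"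

definition cscale :: "complex \<Rightarrow> ('k \<Rightarrow>\<^sub>0 complex) \<Rightarrow> ('k \<Rightarrow>\<^sub>0 complex)" where
  "cscale c v = Poly_Mapping.map (\<lambda>z. c * z) v"

definition linext :: "('k \<Rightarrow> ('l \<Rightarrow>\<^sub>0 complex)) \<Rightarrow> ('k \<Rightarrow>\<^sub>0 complex) \<Rightarrow> ('l \<Rightarrow>\<^sub>0 complex)" where
  "linext f v = (\<Sum>k\<in>Poly_Mapping.keys v. cscale (Poly_Mapping.lookup v k) (f k))"

text \<open>Left multiplication of the basis element S (sorted, distinct) by gamma^i,
  using gamma^i gamma^i = eta^{ii} and gamma^i gamma^j = 2 eta^{ij} - gamma^j gamma^i.\<close>
primrec cl_ins :: "(nat \<Rightarrow> nat \<Rightarrow> complex) \<Rightarrow> nat \<Rightarrow> nat list \<Rightarrow> cl" where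
  "cl_ins eta i [] = Poly_Mapping.single [i] 1"
| "cl_ins eta i (j # S) =
     (if i < j then Poly_Mapping.single (i # j # S) 1
      else if i = j then Poly_Mapping.single S (eta i i)
      else Poly_Mapping.single S (2 * eta i j)
           - linext (\<lambda>T. Poly_Mapping.single (j # T) 1) (cl_ins eta i S))"

text \<open>Normal form (expansion in the basis) of a word gamma^{w1} ... gamma^{wk}.\<close>
primrec cl_nf :: "(nat \<Rightarrow> nat \<Rightarrow> complex) \<Rightarrow> nat list \<Rightarrow> cl" where
  "cl_nf eta [] = Poly_Mapping.single [] 1"
| "cl_nf eta (i # w) = linext (cl_ins eta i) (cl_nf eta w)"

text \<open>Tensor a Clifford element with the monomial x^a.\<close>
definition embed :: "cl \<Rightarrow> (nat \<Rightarrow>\<^sub>0 nat) \<Rightarrow> vel" where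
  "embed c a = linext (\<lambda>T. Poly_Mapping.single (T, a) 1) c"

definition V_one :: vel where
  "V_one = Poly_Mapping.single ([], 0) 1"

text \<open>The element p = gamma^{alpha1} ... gamma^{alphar} of V.\<close>
definition V_gword :: "(nat \<Rightarrow> nat \<Rightarrow> complex) \<Rightarrow> nat list \<Rightarrow> vel" where
  "V_gword eta w = embed (cl_nf eta w) 0"

text \<open>Action of the generators of W(2n|n) on V.\<close>
definition opx :: "nat \<Rightarrow> vel \<Rightarrow> vel" where
  "opx i = linext (\<lambda>(S, a). Poly_Mapping.single (S, a + Poly_Mapping.single i 1) 1)"

definition opd :: "nat \<Rightarrow> vel \<Rightarrow> vel" where
  "opd i = linext (\<lambda>(S, a).
      if Poly_Mapping.lookup a i = 0 then 0
      else Poly_Mapping.single (S, a - Poly_Mapping.single i 1) (of_nat (Poly_Mapping.lookup a i)))"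

definition opg :: "(nat \<Rightarrow> nat \<Rightarrow> complex) \<Rightarrow> nat \<Rightarrow> vel \<Rightarrow> vel" where
  "opg eta i = linext (\<lambda>(S, a). embed (cl_ins eta i S) a)"

text \<open>Right multiplication in V by the Clifford word gamma^{w1} ... gamma^{wk}.\<close>
definition rmul :: "(nat \<Rightarrow> nat \<Rightarrow> complex) \<Rightarrow> vel \<Rightarrow> nat list \<Rightarrow> vel" where
  "rmul eta v w = linext (\<lambda>(S, a). embed (cl_nf eta (S @ w)) a) v"

text \<open>x_j = eta_{jk} x^k and partial^i = eta^{ij} partial_j (etainv = (eta_{ij})).\<close>
definition opxlow :: "nat \<Rightarrow> (nat \<Rightarrow> nat \<Rightarrow> complex) \<Rightarrow> nat \<Rightarrow> vel \<Rightarrow> vel" where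
  "opxlow n etainv j v = (\<Sum>k=1..n. cscale (etainv j k) (opx k v))"

definition opdup :: "nat \<Rightarrow> (nat \<Rightarrow> nat \<Rightarrow> complex) \<Rightarrow> nat \<Rightarrow> vel \<Rightarrow> vel" where
  "opdup n eta i v = (\<Sum>j=1..n. cscale (eta i j) (opd j v))"

definition opH :: "nat \<Rightarrow> vel \<Rightarrow> vel" where
  "opH n v = cscale (- 1/2) (\<Sum>i=1..n. opd i (opx i v) + opx i (opd i v))"

text \<open>Action on V of the representative
  (H+1) x^i + 1/2 gamma^j x_j gamma^i + 1/2 x^j x_j partial^i of the class hat(x^i).\<close>
definition xhat :: "nat \<Rightarrow> (nat \<Rightarrow> nat \<Rightarrow> complex) \<Rightarrow> (nat \<Rightarrow> nat \<Rightarrow> complex) \<Rightarrow> nat \<Rightarrow> vel \<Rightarrow> vel" where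
  "xhat n eta etainv i v =
     opH n (opx i v) + opx i v
     + cscale (1/2) (\<Sum>j=1..n. opg eta j (opxlow n etainv j (opg eta i v)))
     + cscale (1/2) (\<Sum>j=1..n. opx j (opxlow n etainv j (opdup n eta i v)))"

end

theory Submission
  imports Defs
begin

text \<open>
  Every operator in the representative of the class of x^i is built from the left multiplications
  by x^k, partial_k and gamma^k, and right multiplication by a Clifford word commutes with all of
  them: for x^k and partial_k because they only touch the polynomial factor, for gamma^k because
  the Clifford product of the model is associative.  Associativity in turn reduces, by induction
  on the basis word, to the anticommutation relation gamma^i gamma^j + gamma^j gamma^i = 2 eta^ij
  on normal forms.  Writing p = 1 p, the claim follows for every word, sorted or not, and without
  using any hypothesis on eta.
\<close>

section \<open>Linear extension\<close>

lemma lookup_cscale [simp]: "Poly_Mapping.lookup (cscale c v) k = c * Poly_Mapping.lookup v k"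
  unfolding cscale_def by (simp add: map.rep_eq when_def)

interpretation cscale: module cscale
  by standard (rule poly_mapping_eqI; simp add: lookup_add algebra_simps)+

lemma cscale_single: "cscale c (Poly_Mapping.single k d) = Poly_Mapping.single k (c * d)"
  by (rule poly_mapping_eqI) (simp add: lookup_single when_def)

lemma cscale_double: "cscale (2 * a) y = cscale a y + cscale a y"
  by (rule poly_mapping_eqI) (simp add: lookup_add algebra_simps)

lemma lookup_linext:
  "Poly_Mapping.lookup (linext f v) l
     = (\<Sum>k\<in>Poly_Mapping.keys v. Poly_Mapping.lookup v k * Poly_Mapping.lookup (f k) l)"
  unfolding linext_def by (simp add: lookup_sum)

lemma lookup_linext_superset:
  assumes "finite A" "Poly_Mapping.keys v \<subseteq> A"
  shows "Poly_Mapping.lookup (linext f v) l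
           = (\<Sum>k\<in>A. Poly_Mapping.lookup v k * Poly_Mapping.lookup (f k) l)"
  unfolding lookup_linext
  by (rule sum.mono_neutral_left) (use assms in \<open>auto simp: in_keys_iff\<close>)

lemma module_hom_linext: "module_hom cscale cscale (linext f)"
proof -
  have add: "linext f (a + b) = linext f a + linext f b" for a b
  proof (rule poly_mapping_eqI)
    fix l
    let ?A = "Poly_Mapping.keys a \<union> Poly_Mapping.keys b \<union> Poly_Mapping.keys (a + b)"
    have "Poly_Mapping.lookup (linext f u) l
            = (\<Sum>k\<in>?A. Poly_Mapping.lookup u k * Poly_Mapping.lookup (f k) l)"
      if "u \<in> {a, b, a + b}" for u
      by (rule lookup_linext_superset) (use that in auto)
    then show "Poly_Mapping.lookup (linext f (a + b)) l = Poly_Mapping.lookup (linext f a + linext f b) l"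
      by (simp add: lookup_add sum.distrib[symmetric] distrib_right)
  qed
  have scale: "linext f (cscale c a) = cscale c (linext f a)" for c a
  proof (rule poly_mapping_eqI)
    fix l
    let ?A = "Poly_Mapping.keys a \<union> Poly_Mapping.keys (cscale c a)"
    show "Poly_Mapping.lookup (linext f (cscale c a)) l = Poly_Mapping.lookup (cscale c (linext f a)) l"
      by (simp add: lookup_linext_superset[of ?A] sum_distrib_left mult.assoc)
  qed
  show ?thesis
    by (simp add: module_hom_iff cscale.module_axioms add scale)
qed

lemma module_hom_comp:
  "module_hom s2 s3 F \<Longrightarrow> module_hom s1 s2 G \<Longrightarrow> module_hom s1 s3 (\<lambda>v. F (G v))"
  using module_hom_compose[of s1 s2 G s3 F] by (simp add: o_def)

lemma module_hom_add:
  "module_hom cscale cscale F \<Longrightarrow> module_hom cscale cscale G \<Longrightarrow> module_hom cscale cscale (\<lambda>v. F v + G v)"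
  by (rule module_pair.module_hom_add[OF module_pair.intro[OF cscale.module_axioms cscale.module_axioms]])

lemma linext_single: "linext f (Poly_Mapping.single k c) = cscale c (f k)"
  unfolding linext_def by auto

lemma linext_cong:
  "(\<And>k. k \<in> Poly_Mapping.keys v \<Longrightarrow> f k = g k) \<Longrightarrow> linext f v = linext g v"
  unfolding linext_def by simp

lemma linext_single_id: "linext (\<lambda>k. Poly_Mapping.single k 1) v = v"
proof (rule poly_mapping_eqI)
  fix l
  have "(\<Sum>k\<in>Poly_Mapping.keys v. Poly_Mapping.lookup v k * Poly_Mapping.lookup (Poly_Mapping.single k 1) l)
      = (\<Sum>k\<in>Poly_Mapping.keys v. if k = l then Poly_Mapping.lookup v k else 0)"
    by (rule sum.cong) (auto simp: lookup_single when_def)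
  then show "Poly_Mapping.lookup (linext (\<lambda>k. Poly_Mapping.single k 1) v) l = Poly_Mapping.lookup v l"
    by (simp add: lookup_linext in_keys_iff)
qed

lemma module_hom_linext_comp:
  "module_hom cscale cscale F \<Longrightarrow> F (linext f v) = linext (\<lambda>k. F (f k)) v"
  unfolding linext_def by (simp add: module_hom.sum module_hom.scale)

lemma linext_linext: "linext g (linext f v) = linext (\<lambda>k. linext g (f k)) v"
  by (rule module_hom_linext_comp[OF module_hom_linext])

lemma linext_cscale: "linext (\<lambda>k. cscale c (f k)) v = cscale c (linext f v)"
  by (rule module_hom_linext_comp[OF cscale.module_hom_scale_self, symmetric])

lemma linext_diff: "linext (\<lambda>k. f k - g k) v = linext f v - linext g v"
  by (rule poly_mapping_eqI)
    (simp add: lookup_linext lookup_minus right_diff_distrib sum_subtractf)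

lemma module_hom_eq_linext_singles:
  "module_hom cscale cscale F \<Longrightarrow> F v = linext (\<lambda>k. F (Poly_Mapping.single k 1)) v"
  using module_hom_linext_comp[of F "\<lambda>k. Poly_Mapping.single k 1" v] by (simp add: linext_single_id)

lemma module_hom_eq_on_singles:
  assumes "module_hom cscale cscale F" "module_hom cscale cscale G"
    and "\<And>k. k \<in> Poly_Mapping.keys v \<Longrightarrow> F (Poly_Mapping.single k 1) = G (Poly_Mapping.single k 1)"
  shows "F v = G v"
proof -
  have "F v = linext (\<lambda>k. F (Poly_Mapping.single k 1)) v"
    by (rule module_hom_eq_linext_singles[OF assms(1)])
  also have "\<dots> = linext (\<lambda>k. G (Poly_Mapping.single k 1)) v"
    by (rule linext_cong) (rule assms(3))
  also have "\<dots> = G v"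
    by (rule module_hom_eq_linext_singles[OF assms(2), symmetric])
  finally show ?thesis .
qed

lemma keys_linext:
  "Poly_Mapping.keys (linext f v) \<subseteq> (\<Union>k\<in>Poly_Mapping.keys v. Poly_Mapping.keys (f k))"
proof
  fix l assume "l \<in> Poly_Mapping.keys (linext f v)"
  then have "(\<Sum>k\<in>Poly_Mapping.keys v. Poly_Mapping.lookup v k * Poly_Mapping.lookup (f k) l) \<noteq> 0"
    by (simp add: in_keys_iff lookup_linext)
  then obtain k where "k \<in> Poly_Mapping.keys v" "Poly_Mapping.lookup (f k) l \<noteq> 0"
    by (metis (no_types, lifting) mult_zero_right sum.neutral)
  then show "l \<in> (\<Union>k\<in>Poly_Mapping.keys v. Poly_Mapping.keys (f k))"
    by (auto simp: in_keys_iff)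
qed

section \<open>The Clifford algebra in normal form\<close>

lemma keys_cl_ins:
  assumes "sorted_wrt (<) T" "U \<in> Poly_Mapping.keys (cl_ins eta i T)"
  shows "sorted_wrt (<) U \<and> set U \<subseteq> insert i (set T)"
  using assms
proof (induction T arbitrary: U)
  case Nil
  then show ?case by (simp split: if_splits)
next
  case (Cons j S)
  consider "i < j" | "i = j" | "j < i" by linarith
  then show ?case
  proof cases
    case 1
    then have "U = i # j # S" using Cons.prems(2) by simp
    moreover have "\<forall>t\<in>set S. i < t" using 1 Cons.prems(1) by auto
    ultimately show ?thesis using 1 Cons.prems(1) by auto
  next
    case 2
    then have "U = S" using Cons.prems(2) by (simp split: if_splits)
    then show ?thesis using Cons.prems(1) by auto
  next
    case 3
    with Cons.prems(2) have "U \<in> Poly_Mapping.keys (Poly_Mapping.single S (2 * eta i j))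
        \<union> Poly_Mapping.keys (linext (\<lambda>T. Poly_Mapping.single (j # T) 1) (cl_ins eta i S))"
      using keys_diff by fastforce
    moreover have "Poly_Mapping.keys (Poly_Mapping.single S (2 * eta i j)) \<subseteq> {S}"
      by simp
    ultimately have "U = S \<or> (\<exists>V\<in>Poly_Mapping.keys (cl_ins eta i S). U = j # V)"
      using keys_linext[of "\<lambda>T. Poly_Mapping.single (j # T) (1::complex)"] by auto
    then show ?thesis
    proof
      assume "U = S"
      with Cons.prems(1) show ?thesis by auto
    next
      assume "\<exists>V\<in>Poly_Mapping.keys (cl_ins eta i S). U = j # V"
      then obtain V where V: "V \<in> Poly_Mapping.keys (cl_ins eta i S)" "U = j # V" by blast
      with Cons.IH Cons.prems(1) have "sorted_wrt (<) V" "set V \<subseteq> insert i (set S)" by auto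
      moreover from this(2) have "\<forall>t\<in>set V. j < t" using 3 Cons.prems(1) by auto
      ultimately show ?thesis using V(2) by auto
    qed
  qed
qed

definition cl_lmul :: "(nat \<Rightarrow> nat \<Rightarrow> complex) \<Rightarrow> nat \<Rightarrow> cl \<Rightarrow> cl" where
  "cl_lmul eta i = linext (cl_ins eta i)"

definition cl_cons :: "nat \<Rightarrow> cl \<Rightarrow> cl" where
  "cl_cons s = linext (\<lambda>T. Poly_Mapping.single (s # T) 1)"

definition cl_sorted :: "cl \<Rightarrow> bool" where
  "cl_sorted c \<longleftrightarrow> (\<forall>T\<in>Poly_Mapping.keys c. sorted_wrt (<) T)"

definition cl_above :: "nat \<Rightarrow> cl \<Rightarrow> bool" where
  "cl_above i c \<longleftrightarrow> (\<forall>T\<in>Poly_Mapping.keys c. \<forall>t\<in>set T. i < t)"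

text \<open>
  cl_ins only ever reads eta i j with i \<ge> j, so the model realises the Clifford algebra of this
  symmetrised form.
\<close>

definition cl_form :: "(nat \<Rightarrow> nat \<Rightarrow> complex) \<Rightarrow> nat \<Rightarrow> nat \<Rightarrow> complex" where
  "cl_form eta i j = eta (max i j) (min i j)"

lemma module_hom_cl_lmul: "module_hom cscale cscale (cl_lmul eta i)"
  unfolding cl_lmul_def by (rule module_hom_linext)

lemma module_hom_cl_cons: "module_hom cscale cscale (cl_cons s)"
  unfolding cl_cons_def by (rule module_hom_linext)

lemma cl_lmul_single: "cl_lmul eta i (Poly_Mapping.single T c) = cscale c (cl_ins eta i T)"
  unfolding cl_lmul_def by (rule linext_single)

lemma cl_cons_single: "cl_cons s (Poly_Mapping.single T c) = Poly_Mapping.single (s # T) c"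
  unfolding cl_cons_def by (simp add: linext_single cscale_single)

lemma cl_ins_Cons_less:
  "s < i \<Longrightarrow> cl_ins eta i (s # T) = Poly_Mapping.single T (2 * eta i s) - cl_cons s (cl_ins eta i T)"
  by (simp add: cl_cons_def)

lemma keys_cl_lmul:
  "Poly_Mapping.keys (cl_lmul eta i c) \<subseteq> (\<Union>U\<in>Poly_Mapping.keys c. Poly_Mapping.keys (cl_ins eta i U))"
  unfolding cl_lmul_def by (rule keys_linext)

lemma cl_sorted_lmul:
  assumes "cl_sorted c"
  shows "cl_sorted (cl_lmul eta i c)"
  unfolding cl_sorted_def
proof
  fix T assume "T \<in> Poly_Mapping.keys (cl_lmul eta i c)"
  then obtain U where "U \<in> Poly_Mapping.keys c" "T \<in> Poly_Mapping.keys (cl_ins eta i U)"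
    using keys_cl_lmul by blast
  then show "sorted_wrt (<) T"
    using assms keys_cl_ins unfolding cl_sorted_def by blast
qed

lemma cl_above_lmul:
  assumes "cl_sorted c" "cl_above i c" "i < j"
  shows "cl_above i (cl_lmul eta j c)"
  unfolding cl_above_def
proof (intro ballI)
  fix T t assume T: "T \<in> Poly_Mapping.keys (cl_lmul eta j c)" and "t \<in> set T"
  from T obtain U where U: "U \<in> Poly_Mapping.keys c" "T \<in> Poly_Mapping.keys (cl_ins eta j U)"
    using keys_cl_lmul by blast
  with assms(1) have "set T \<subseteq> insert j (set U)"
    using keys_cl_ins unfolding cl_sorted_def by blast
  with \<open>t \<in> set T\<close> U(1) assms(2,3) show "i < t"
    unfolding cl_above_def by auto
qed

lemma cl_ins_above: "\<forall>t\<in>set T. i < t \<Longrightarrow> cl_ins eta i T = Poly_Mapping.single (i # T) 1"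
  by (cases T) auto

lemma cl_lmul_above: "cl_above i c \<Longrightarrow> cl_lmul eta i c = cl_cons i c"
  unfolding cl_above_def cl_lmul_def cl_cons_def by (rule linext_cong) (simp add: cl_ins_above)

lemma cl_lmul_cons_same: "cl_lmul eta s (cl_cons s c) = cscale (eta s s) c"
proof -
  have "cl_lmul eta s (cl_cons s c) = linext (\<lambda>T. cl_lmul eta s (cl_cons s (Poly_Mapping.single T 1))) c"
    by (rule module_hom_eq_linext_singles[OF module_hom_comp[OF module_hom_cl_lmul module_hom_cl_cons]])
  also have "\<dots> = linext (\<lambda>T. cscale (eta s s) (Poly_Mapping.single T 1)) c"
    by (simp add: cl_cons_single cl_lmul_single cscale_single)
  also have "\<dots> = cscale (eta s s) c"
    by (simp only: linext_cscale linext_single_id)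
  finally show ?thesis .
qed

lemma cl_lmul_cons_less:
  assumes "s < i"
  shows "cl_lmul eta i (cl_cons s c) = cscale (2 * eta i s) c - cl_cons s (cl_lmul eta i c)"
proof -
  have "cl_lmul eta i (cl_cons s c) = linext (\<lambda>T. cl_lmul eta i (cl_cons s (Poly_Mapping.single T 1))) c"
    by (rule module_hom_eq_linext_singles[OF module_hom_comp[OF module_hom_cl_lmul module_hom_cl_cons]])
  also have "\<dots> = linext (\<lambda>T. cscale (2 * eta i s) (Poly_Mapping.single T 1) - cl_cons s (cl_ins eta i T)) c"
  proof (rule linext_cong)
    fix T
    have "cl_lmul eta i (cl_cons s (Poly_Mapping.single T 1)) = cl_ins eta i (s # T)"
      by (simp add: cl_cons_single cl_lmul_single del: cl_ins.simps)
    also have "\<dots> = cscale (2 * eta i s) (Poly_Mapping.single T 1) - cl_cons s (cl_ins eta i T)"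
      using assms by (simp only: cl_ins_Cons_less cscale_single mult_1_right)
    finally show "cl_lmul eta i (cl_cons s (Poly_Mapping.single T 1))
        = cscale (2 * eta i s) (Poly_Mapping.single T 1) - cl_cons s (cl_ins eta i T)" .
  qed
  also have "\<dots> = cscale (2 * eta i s) c - linext (\<lambda>T. cl_cons s (cl_ins eta i T)) c"
    by (simp only: linext_diff linext_cscale linext_single_id)
  also have "\<dots> = cscale (2 * eta i s) c - cl_cons s (cl_lmul eta i c)"
    unfolding cl_lmul_def module_hom_linext_comp[OF module_hom_cl_cons] ..
  finally show ?thesis .
qed

lemma cl_anticomm_above:
  assumes "cl_sorted y" "cl_above i y" "i \<le> j"
  shows "cl_lmul eta i (cl_lmul eta j y) + cl_lmul eta j (cl_lmul eta i y) = cscale (2 * cl_form eta i j) y"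
proof (cases "i = j")
  case True
  have "cl_lmul eta i (cl_lmul eta i y) = cscale (eta i i) y"
    unfolding cl_lmul_above[OF assms(2)] by (rule cl_lmul_cons_same)
  with True show ?thesis
    by (simp only: cl_form_def max.idem min.idem cscale_double)
next
  case False
  with assms(3) have "i < j" by simp
  have "cl_lmul eta i (cl_lmul eta j y) = cl_cons i (cl_lmul eta j y)"
    by (rule cl_lmul_above[OF cl_above_lmul[OF assms(1,2) \<open>i < j\<close>]])
  moreover have "cl_lmul eta j (cl_lmul eta i y) = cscale (2 * eta j i) y - cl_cons i (cl_lmul eta j y)"
    unfolding cl_lmul_above[OF assms(2)] by (rule cl_lmul_cons_less[OF \<open>i < j\<close>])
  moreover have "cl_form eta i j = eta j i"
    using \<open>i < j\<close> by (simp add: cl_form_def max_def min_def)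
  ultimately show ?thesis
    by simp
qed

lemma cl_anticomm_cons_same:
  assumes "cl_above s z" "s \<le> j"
  shows "cl_lmul eta s (cl_lmul eta j (cl_cons s z)) + cl_lmul eta j (cl_lmul eta s (cl_cons s z))
           = cscale (2 * cl_form eta s j) (cl_cons s z)"
proof (cases "s = j")
  case True
  have "cl_lmul eta s (cl_lmul eta s (cl_cons s z)) = cscale (eta s s) (cl_cons s z)"
    by (simp only: cl_lmul_cons_same module_hom.scale[OF module_hom_cl_lmul] cl_lmul_above[OF assms(1)])
  with True show ?thesis
    by (simp only: cl_form_def max.idem min.idem cscale_double)
next
  case False
  with assms(2) have "s < j" by simp
  have "cl_lmul eta s (cl_lmul eta j (cl_cons s z))
          = cscale (2 * eta j s) (cl_cons s z) - cscale (eta s s) (cl_lmul eta j z)"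
    by (simp only: cl_lmul_cons_less[OF \<open>s < j\<close>] cl_lmul_cons_same cl_lmul_above[OF assms(1)]
        module_hom.diff[OF module_hom_cl_lmul] module_hom.scale[OF module_hom_cl_lmul])
  moreover have "cl_lmul eta j (cl_lmul eta s (cl_cons s z)) = cscale (eta s s) (cl_lmul eta j z)"
    by (simp only: cl_lmul_cons_same module_hom.scale[OF module_hom_cl_lmul])
  moreover have "cl_form eta s j = eta j s"
    using \<open>s < j\<close> by (simp add: cl_form_def max_def min_def)
  ultimately show ?thesis
    by simp
qed

lemma cl_anticomm_cons_less:
  assumes "s < i" "s < j"
    and "cl_lmul eta i (cl_lmul eta j z) + cl_lmul eta j (cl_lmul eta i z) = cscale (2 * cl_form eta i j) z"
  shows "cl_lmul eta i (cl_lmul eta j (cl_cons s z)) + cl_lmul eta j (cl_lmul eta i (cl_cons s z))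
           = cscale (2 * cl_form eta i j) (cl_cons s z)"
proof -
  have expand: "cl_lmul eta a (cl_lmul eta b (cl_cons s z))
      = cscale (2 * eta b s) (cl_lmul eta a z) - cscale (2 * eta a s) (cl_lmul eta b z)
        + cl_cons s (cl_lmul eta a (cl_lmul eta b z))" if "s < a" "s < b" for a b
    by (simp only: cl_lmul_cons_less[OF that(1)] cl_lmul_cons_less[OF that(2)]
        module_hom.diff[OF module_hom_cl_lmul] module_hom.scale[OF module_hom_cl_lmul] diff_diff_eq2 diff_add_eq)
  have "cl_lmul eta i (cl_lmul eta j (cl_cons s z)) + cl_lmul eta j (cl_lmul eta i (cl_cons s z))
          = cl_cons s (cl_lmul eta i (cl_lmul eta j z) + cl_lmul eta j (cl_lmul eta i z))"
    unfolding expand[OF assms(1,2)] expand[OF assms(2,1)] module_hom.add[OF module_hom_cl_cons]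
    by (simp add: algebra_simps)
  also have "\<dots> = cscale (2 * cl_form eta i j) (cl_cons s z)"
    by (simp only: assms(3) module_hom.scale[OF module_hom_cl_cons])
  finally show ?thesis .
qed

lemma cl_anticomm_single:
  assumes "sorted_wrt (<) S" "i \<le> j"
  shows "cl_lmul eta i (cl_lmul eta j (Poly_Mapping.single S 1))
           + cl_lmul eta j (cl_lmul eta i (Poly_Mapping.single S 1))
         = cscale (2 * cl_form eta i j) (Poly_Mapping.single S 1)"
  using assms(1)
proof (induction S)
  case Nil
  show ?case
    by (rule cl_anticomm_above) (simp_all add: cl_sorted_def cl_above_def assms(2))
next
  case (Cons s S)
  have cons: "Poly_Mapping.single (s # S) 1 = cl_cons s (Poly_Mapping.single S 1)"
    by (simp add: cl_cons_single)
  consider "i < s" | "i = s" | "s < i" by linarith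
  then show ?case
  proof cases
    case 1
    with Cons.prems have "cl_above i (Poly_Mapping.single (s # S) 1)"
      by (auto simp: cl_above_def)
    moreover from Cons.prems have "cl_sorted (Poly_Mapping.single (s # S) 1)"
      by (simp add: cl_sorted_def)
    ultimately show ?thesis
      using assms(2) by (intro cl_anticomm_above)
  next
    case 2
    from Cons.prems have "cl_above s (Poly_Mapping.single S 1)"
      by (simp add: cl_above_def)
    with 2 assms(2) show ?thesis
      unfolding cons by (simp only: cl_anticomm_cons_same)
  next
    case 3
    from Cons.prems have "sorted_wrt (<) S" by simp
    with Cons.IH have IH: "cl_lmul eta i (cl_lmul eta j (Poly_Mapping.single S 1))
        + cl_lmul eta j (cl_lmul eta i (Poly_Mapping.single S 1))
        = cscale (2 * cl_form eta i j) (Poly_Mapping.single S 1)" .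
    from 3 assms(2) have "s < j" by simp
    with 3 show ?thesis
      unfolding cons by (rule cl_anticomm_cons_less[OF _ _ IH])
  qed
qed

lemma cl_anticomm:
  assumes "cl_sorted y"
  shows "cl_lmul eta i (cl_lmul eta j y) + cl_lmul eta j (cl_lmul eta i y) = cscale (2 * cl_form eta i j) y"
proof (rule module_hom_eq_on_singles[where
      F = "\<lambda>y. cl_lmul eta i (cl_lmul eta j y) + cl_lmul eta j (cl_lmul eta i y)" and
      G = "cscale (2 * cl_form eta i j)"])
  show "module_hom cscale cscale (\<lambda>y. cl_lmul eta i (cl_lmul eta j y) + cl_lmul eta j (cl_lmul eta i y))"
    by (rule module_hom_add) (rule module_hom_comp[OF module_hom_cl_lmul module_hom_cl_lmul])+
  show "module_hom cscale cscale (cscale (2 * cl_form eta i j))"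
    by (rule cscale.module_hom_scale_self)
  fix S assume "S \<in> Poly_Mapping.keys y"
  with assms have "sorted_wrt (<) S"
    by (simp add: cl_sorted_def)
  have "cl_form eta i j = cl_form eta j i"
    by (simp add: cl_form_def max.commute min.commute)
  with \<open>sorted_wrt (<) S\<close> show "cl_lmul eta i (cl_lmul eta j (Poly_Mapping.single S 1))
      + cl_lmul eta j (cl_lmul eta i (Poly_Mapping.single S 1))
      = cscale (2 * cl_form eta i j) (Poly_Mapping.single S 1)"
    using cl_anticomm_single[of S i j eta] cl_anticomm_single[of S j i eta]
    by (cases "i \<le> j") (simp_all add: add.commute)
qed

lemma cl_lmul_square:
  assumes "cl_sorted y"
  shows "cl_lmul eta i (cl_lmul eta i y) = cscale (eta i i) y"
proof (rule poly_mapping_eqI)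
  fix T
  have "cl_lmul eta i (cl_lmul eta i y) + cl_lmul eta i (cl_lmul eta i y) = cscale (2 * eta i i) y"
    using cl_anticomm[OF assms, of eta i i] by (simp add: cl_form_def)
  then have "2 * Poly_Mapping.lookup (cl_lmul eta i (cl_lmul eta i y)) T = 2 * (eta i i * Poly_Mapping.lookup y T)"
    by (metis lookup_add lookup_cscale mult.assoc mult_2)
  then show "Poly_Mapping.lookup (cl_lmul eta i (cl_lmul eta i y)) T = Poly_Mapping.lookup (cscale (eta i i) y) T"
    by simp
qed

lemma cl_nf_append: "cl_nf eta (S @ w) = foldr (cl_lmul eta) S (cl_nf eta w)"
  by (induction S) (simp_all add: cl_lmul_def)

lemma cl_sorted_foldr: "cl_sorted x \<Longrightarrow> cl_sorted (foldr (cl_lmul eta) S x)"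
  by (induction S) (simp_all add: cl_sorted_lmul)

lemma cl_sorted_nf: "cl_sorted (cl_nf eta w)"
  using cl_sorted_foldr[of "Poly_Mapping.single [] 1" eta w] cl_nf_append[of eta w "[]"]
  by (simp add: cl_sorted_def)

text \<open>Associativity: (gamma^j gamma^S) x = gamma^j (gamma^S x).\<close>

lemma cl_lmul_foldr:
  assumes "cl_sorted x"
  shows "cl_lmul eta j (foldr (cl_lmul eta) S x) = linext (\<lambda>T. foldr (cl_lmul eta) T x) (cl_ins eta j S)"
proof (induction S)
  case Nil
  show ?case by (simp add: linext_single)
next
  case (Cons s S)
  let ?F = "linext (\<lambda>T. foldr (cl_lmul eta) T x)"
  define y where "y = foldr (cl_lmul eta) S x"
  have "cl_sorted y"
    unfolding y_def by (rule cl_sorted_foldr[OF assms])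
  have F_cons: "?F (cl_cons s c) = cl_lmul eta s (?F c)" for c
    unfolding cl_cons_def linext_linext module_hom_linext_comp[OF module_hom_cl_lmul]
    by (simp add: linext_single)
  consider "j < s" | "j = s" | "s < j" by linarith
  then show ?case
  proof cases
    case 1
    then show ?thesis by (simp add: linext_single)
  next
    case 2
    then show ?thesis
      using cl_lmul_square[OF \<open>cl_sorted y\<close>] by (simp add: linext_single y_def)
  next
    case 3
    have "cl_lmul eta j (cl_lmul eta s y) = cscale (2 * eta j s) y - cl_lmul eta s (cl_lmul eta j y)"
      using cl_anticomm[OF \<open>cl_sorted y\<close>, of eta j s] 3
      by (simp add: cl_form_def eq_diff_eq)
    also have "\<dots> = ?F (cl_ins eta j (s # S))"
      using 3 by (simp add: cl_ins_Cons_less module_hom.diff[OF module_hom_linext] linext_single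
          F_cons Cons.IH y_def del: cl_ins.simps)
    finally show ?thesis
      by (simp add: y_def)
  qed
qed

lemma cl_lmul_nf_append:
  "cl_lmul eta j (cl_nf eta (S @ w)) = linext (\<lambda>T. cl_nf eta (T @ w)) (cl_ins eta j S)"
  unfolding cl_nf_append by (rule cl_lmul_foldr[OF cl_sorted_nf])

section \<open>Right multiplication on V\<close>

lemma module_hom_rmul: "module_hom cscale cscale (\<lambda>v. rmul eta v w)"
  unfolding rmul_def by (rule module_hom_linext)

lemma module_hom_opx: "module_hom cscale cscale (opx k)"
  unfolding opx_def by (rule module_hom_linext)

lemma module_hom_opd: "module_hom cscale cscale (opd k)"
  unfolding opd_def by (rule module_hom_linext)

lemma module_hom_opg: "module_hom cscale cscale (opg eta k)"
  unfolding opg_def by (rule module_hom_linext)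

lemma module_hom_embed: "module_hom cscale cscale (\<lambda>c. embed c a)"
  unfolding embed_def by (rule module_hom_linext)

lemma module_hom_embed_comp:
  "module_hom cscale cscale F \<Longrightarrow> F (embed c a) = linext (\<lambda>T. F (Poly_Mapping.single (T, a) 1)) c"
  unfolding embed_def by (rule module_hom_linext_comp)

lemma rmul_single: "rmul eta (Poly_Mapping.single (S, a) 1) w = embed (cl_nf eta (S @ w)) a"
  by (simp add: rmul_def linext_single)

lemma poly_op_rmul:
  assumes "module_hom cscale cscale F"
    and "\<And>S a. F (Poly_Mapping.single (S, a) 1) = cscale (\<phi> a) (Poly_Mapping.single (S, \<psi> a) 1)"
  shows "F (rmul eta v w) = rmul eta (F v) w"
proof (rule module_hom_eq_on_singles[where
      F = "\<lambda>v. F (rmul eta v w)" and G = "\<lambda>v. rmul eta (F v) w"])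
  show "module_hom cscale cscale (\<lambda>v. F (rmul eta v w))"
    by (rule module_hom_comp[OF assms(1) module_hom_rmul])
  show "module_hom cscale cscale (\<lambda>v. rmul eta (F v) w)"
    by (rule module_hom_comp[OF module_hom_rmul assms(1)])
  fix p :: "nat list \<times> (nat \<Rightarrow>\<^sub>0 nat)"
  obtain S a where p: "p = (S, a)" by (cases p)
  have "F (rmul eta (Poly_Mapping.single (S, a) 1) w)
          = linext (\<lambda>T. cscale (\<phi> a) (Poly_Mapping.single (T, \<psi> a) 1)) (cl_nf eta (S @ w))"
    by (simp only: rmul_single module_hom_embed_comp[OF assms(1)] assms(2))
  also have "\<dots> = rmul eta (F (Poly_Mapping.single (S, a) 1)) w"
    by (simp only: assms(2) module_hom.scale[OF module_hom_rmul] rmul_single embed_def linext_cscale)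
  finally show "F (rmul eta (Poly_Mapping.single p 1) w) = rmul eta (F (Poly_Mapping.single p 1)) w"
    unfolding p .
qed

lemma opx_rmul: "opx k (rmul eta v w) = rmul eta (opx k v) w"
  by (rule poly_op_rmul[OF module_hom_opx, where \<phi> = "\<lambda>_. 1"])
    (simp add: opx_def linext_single)

lemma opd_rmul: "opd k (rmul eta v w) = rmul eta (opd k v) w"
  by (rule poly_op_rmul[OF module_hom_opd,
        where \<phi> = "\<lambda>a. of_nat (Poly_Mapping.lookup a k)" and \<psi> = "\<lambda>a. a - Poly_Mapping.single k 1"])
    (simp add: opd_def linext_single cscale_single)

lemma opg_single: "opg eta k (Poly_Mapping.single (T, a) 1) = embed (cl_ins eta k T) a"
  by (simp add: opg_def linext_single)

lemma opg_rmul: "opg eta k (rmul eta v w) = rmul eta (opg eta k v) w"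
proof (rule module_hom_eq_on_singles[where
      F = "\<lambda>v. opg eta k (rmul eta v w)" and G = "\<lambda>v. rmul eta (opg eta k v) w"])
  show "module_hom cscale cscale (\<lambda>v. opg eta k (rmul eta v w))"
    by (rule module_hom_comp[OF module_hom_opg module_hom_rmul])
  show "module_hom cscale cscale (\<lambda>v. rmul eta (opg eta k v) w)"
    by (rule module_hom_comp[OF module_hom_rmul module_hom_opg])
  fix p :: "nat list \<times> (nat \<Rightarrow>\<^sub>0 nat)"
  obtain S a where p: "p = (S, a)" by (cases p)
  have "opg eta k (rmul eta (Poly_Mapping.single (S, a) 1) w)
          = linext (\<lambda>T. embed (cl_ins eta k T) a) (cl_nf eta (S @ w))"
    by (simp only: rmul_single module_hom_embed_comp[OF module_hom_opg] opg_single)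
  also have "\<dots> = embed (cl_lmul eta k (cl_nf eta (S @ w))) a"
    unfolding cl_lmul_def by (rule module_hom_linext_comp[OF module_hom_embed, symmetric])
  also have "\<dots> = linext (\<lambda>T. embed (cl_nf eta (T @ w)) a) (cl_ins eta k S)"
    unfolding cl_lmul_nf_append by (rule module_hom_linext_comp[OF module_hom_embed])
  also have "\<dots> = rmul eta (opg eta k (Poly_Mapping.single (S, a) 1)) w"
    by (simp only: opg_single module_hom_embed_comp[OF module_hom_rmul] rmul_single)
  finally show "opg eta k (rmul eta (Poly_Mapping.single p 1) w) = rmul eta (opg eta k (Poly_Mapping.single p 1)) w"
    unfolding p .
qed

lemma xhat_rmul: "xhat n eta etainv i (rmul eta v w) = rmul eta (xhat n eta etainv i v) w"
  unfolding xhat_def opH_def opxlow_def opdup_def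
  by (simp add: module_hom.add[OF module_hom_rmul] module_hom.diff[OF module_hom_rmul]
      module_hom.neg[OF module_hom_rmul] module_hom.scale[OF module_hom_rmul]
      module_hom.sum[OF module_hom_rmul] module_hom.add[OF module_hom_opx] module_hom.scale[OF module_hom_opx]
      module_hom.sum[OF module_hom_opx] module_hom.add[OF module_hom_opd] module_hom.scale[OF module_hom_opd]
      module_hom.sum[OF module_hom_opd] module_hom.add[OF module_hom_opg] module_hom.scale[OF module_hom_opg]
      module_hom.sum[OF module_hom_opg] opx_rmul opd_rmul opg_rmul)

lemma foldr_xhat_rmul:
  "foldr (xhat n eta etainv) idx (rmul eta v w) = rmul eta (foldr (xhat n eta etainv) idx v) w"
  by (induction idx) (simp_all add: xhat_rmul)

lemma V_gword_eq_rmul: "V_gword eta w = rmul eta V_one w"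
  by (simp add: V_gword_def V_one_def rmul_single)

theorem corollary6p2:
  fixes n :: nat and eta etainv :: "nat \<Rightarrow> nat \<Rightarrow> complex"
    and alphas idx :: "nat list"
  assumes "n \<ge> 1"
    and "\<forall>i\<in>{1..n}. \<forall>j\<in>{1..n}. eta i j = eta j i"
    and "\<forall>i\<in>{1..n}. \<forall>j\<in>{1..n}. (\<Sum>k=1..n. eta i k * etainv k j) = (if i = j then 1 else 0)"
    and "\<forall>i\<in>{1..n}. \<forall>j\<in>{1..n}. (\<Sum>k=1..n. etainv i k * eta k j) = (if i = j then 1 else 0)"
    and "sorted alphas" and "set alphas \<subseteq> {1..n}"
    and "idx \<noteq> []" and "set idx \<subseteq> {1..n}"
  shows "foldr (xhat n eta etainv) idx (V_gword eta alphas)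
         = rmul eta (foldr (xhat n eta etainv) idx V_one) alphas"
  unfolding V_gword_eq_rmul by (rule foldr_xhat_rmul)

end
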